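(* Let $n \geq 3$, and let $\Sigma = \{x \in S^n : x_{n+1} = 0\}$ be the equator of the unit sphere $S^n \subset \mathbb{R}^{n+1}$, equipped with the metric induced by the standard metric $\overline{g}$ (so $\Sigma$ is a round unit $(n-1)$-sphere). Then there exists a smooth function $\eta: \Sigma \to \mathbb{R}$ such that \[\Delta_\Sigma \eta + (n-1)\eta < 0 \quad \text{at every point of } \Sigma\] and \[\int_\Sigma \big(|\nabla_\Sigma \eta|^2 - (n-1)\eta^2\big)\, d\sigma_{\overline{g}} > 0.\]
   Context: $\Delta_\Sigma$, $\nabla_\Sigma$ and $d\sigma_{\overline{g}}$ denote the Laplacian, gradient and area measure of $\Sigma$ with the induced metric. *)

theory Defs
  imports "HOL-Analysis.Analysis"
begin

fun Ck :: "nat \<Rightarrow> 'a::real_normed_vector set \<Rightarrow> ('a \<Rightarrow> real) \<Rightarrow> bool" where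
  "Ck 0 U f = continuous_on U f"
| "Ck (Suc k) U f = (\<exists>f'. (\<forall>x\<in>U. (f has_derivative f' x) (at x)) \<and> (\<forall>v. Ck k U (\<lambda>x. f' x v)))"

definition smooth_on :: "'a::real_normed_vector set \<Rightarrow> ('a \<Rightarrow> real) \<Rightarrow> bool" where
  "smooth_on U f = (\<forall>k. Ck k U f)"

definition egrad :: "(real^'n \<Rightarrow> real) \<Rightarrow> real^'n \<Rightarrow> real^'n" where
  "egrad f x = (\<chi> i. frechet_derivative f (at x) (axis i 1))"

definition elaplacian :: "(real^'n \<Rightarrow> real) \<Rightarrow> real^'n \<Rightarrow> real" where
  "elaplacian f x = (\<Sum>i\<in>UNIV. frechet_derivative (\<lambda>y. frechet_derivative f (at y) (axis i 1)) (at x) (axis i 1))"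

(* Unit sphere S^{n-1} = sphere 0 1 in real^'n, n = CARD('n).
   A function eta on the sphere is extended homogeneously of degree 0. *)
definition sph_ext :: "(real^'n \<Rightarrow> real) \<Rightarrow> real^'n \<Rightarrow> real" where
  "sph_ext \<eta> x = \<eta> (x /\<^sub>R norm x)"

definition smooth_on_sphere :: "(real^'n \<Rightarrow> real) \<Rightarrow> bool" where
  "smooth_on_sphere \<eta> = smooth_on (- {0}) (sph_ext \<eta>)"

(* Tangential gradient and Laplace-Beltrami operator of the round unit sphere:
   they coincide at |x| = 1 with the Euclidean gradient / Laplacian of the
   degree-0 homogeneous extension. *)
definition sphere_grad :: "(real^'n \<Rightarrow> real) \<Rightarrow> real^'n \<Rightarrow> real^'n" where
  "sphere_grad \<eta> x = egrad (sph_ext \<eta>) x"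

definition sphere_laplacian :: "(real^'n \<Rightarrow> real) \<Rightarrow> real^'n \<Rightarrow> real" where
  "sphere_laplacian \<eta> x = elaplacian (sph_ext \<eta>) x"

(* Integral w.r.t. the area measure of the unit sphere (cone construction):
   int_{S^{n-1}} g dsigma = n * int_{B^n} g(x/|x|) dx. *)
definition sphere_integral :: "(real^'n \<Rightarrow> real) \<Rightarrow> real" where
  "sphere_integral g = real CARD('n) * integral (ball 0 1) (\<lambda>x. g (x /\<^sub>R norm x))"

end

theory Submission
  imports Defs "HOL-Probability.Distributions"
begin

text \<open>
  Take \<open>\<eta>(x) = \<phi>(x $ a)\<close> for a fixed coordinate \<open>a\<close> and an even sextic \<open>\<phi>\<close>. On the unit
  sphere of \<open>\<real>\<^sup>n\<close> such a zonal function has, with \<open>s = x $ a\<close>,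
  \<open>|\<nabla>\<eta>|\<^sup>2 = (1 - s\<^sup>2) \<phi>'(s)\<^sup>2\<close> and \<open>\<Delta>\<eta> = (1 - s\<^sup>2) \<phi>''(s) - (n - 1) s \<phi>'(s)\<close>, and \<open>\<phi>\<close> is
  chosen so that \<open>\<Delta>\<eta> + (n - 1) \<eta> = -(n - 1) - 5 (n - 1)(n + 1)(n + 3)(n + 5) s^6 < 0\<close>.
  The energy integrand is then an even polynomial \<open>\<Sum>\<^sub>j c\<^sub>j s^(2j)\<close> in \<open>s\<close>. The spherical
  moments \<open>m\<^sub>j\<close> of \<open>s^(2j)\<close> satisfy \<open>m\<^sub>j\<^sub>+\<^sub>1 = m\<^sub>j (2j + 1) / (n + 2j)\<close>, so the energy
  \<open>\<Sum>\<^sub>j c\<^sub>j m\<^sub>j\<close> is \<open>m\<^sub>0\<close> times a rational function of \<open>n\<close>, which is positive for \<open>n \<ge> 3\<close>.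
\<close>

lemma Ck_SucD: "Ck (Suc k) U f \<Longrightarrow> Ck k U f"
proof (induction k arbitrary: f)
  case 0
  then obtain f' where "\<forall>x\<in>U. (f has_derivative f' x) (at x)" by auto
  then show ?case
    by (auto intro!: continuous_at_imp_continuous_on has_derivative_continuous)
next
  case (Suc k)
  then show ?case by (metis Ck.simps(2))
qed

lemma Ck_const: "Ck k U (\<lambda>x. c)"
proof (induction k arbitrary: c)
  case (Suc k)
  show ?case
    by (simp only: Ck.simps, rule exI[of _ "\<lambda>x v. 0"]) (simp add: Suc.IH)
qed simp

lemma Ck_add: "Ck k U f \<Longrightarrow> Ck k U g \<Longrightarrow> Ck k U (\<lambda>x. f x + g x)"
proof (induction k arbitrary: f g)
  case (Suc k)
  then obtain f' g' where
    "\<forall>x\<in>U. (f has_derivative f' x) (at x)" "\<forall>v. Ck k U (\<lambda>x. f' x v)"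
    "\<forall>x\<in>U. (g has_derivative g' x) (at x)" "\<forall>v. Ck k U (\<lambda>x. g' x v)"
    by auto
  with Suc.IH show ?case
    by (simp only: Ck.simps, intro exI[of _ "\<lambda>x v. f' x v + g' x v"])
       (auto intro: has_derivative_add)
qed (auto intro: continuous_on_add)

lemma Ck_mult: "Ck k U f \<Longrightarrow> Ck k U g \<Longrightarrow> Ck k U (\<lambda>x. f x * g x)"
proof (induction k arbitrary: f g)
  case (Suc k)
  then obtain f' g' where
    "\<forall>x\<in>U. (f has_derivative f' x) (at x)" "\<forall>v. Ck k U (\<lambda>x. f' x v)"
    "\<forall>x\<in>U. (g has_derivative g' x) (at x)" "\<forall>v. Ck k U (\<lambda>x. g' x v)"
    by auto
  moreover have "Ck k U f" "Ck k U g" using Suc.prems Ck_SucD by blast+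
  ultimately show ?case using Suc.IH
    by (simp only: Ck.simps, intro exI[of _ "\<lambda>x v. f x * g' x v + f' x v * g x"])
       (auto intro: has_derivative_mult Ck_add)
qed (auto intro: continuous_on_mult)

lemma Ck_power: "Ck k U f \<Longrightarrow> Ck k U (\<lambda>x. f x ^ m)"
  by (induction m) (auto intro: Ck_mult Ck_const)

lemma Ck_bounded_linear: "bounded_linear l \<Longrightarrow> Ck k U l"
  by (cases k) (auto simp: linear_continuous_on intro!: exI[of _ "\<lambda>x. l"] Ck_const
      bounded_linear_imp_has_derivative)

lemma has_derivative_inverse_norm:
  fixes x :: "'a::real_inner"
  assumes "x \<noteq> 0"
  shows "((\<lambda>y. inverse (norm y)) has_derivative (\<lambda>v. - (x \<bullet> v) * inverse (norm x) ^ 3)) (at x)"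
  by (rule derivative_eq_intros has_derivative_norm[OF assms] refl | simp add: assms)+
     (simp add: assms sgn_div_norm inner_commute field_simps power3_eq_cube fun_eq_iff)

lemma Ck_inverse_norm: "Ck k (- {0}) (\<lambda>x::'a::real_inner. inverse (norm x))"
proof (induction k)
  case (Suc k)
  have "Ck k (- {0}) (\<lambda>x::'a. - (x \<bullet> v) * inverse (norm x) ^ 3)" for v
    by (intro Ck_mult Ck_power Suc.IH Ck_bounded_linear bounded_linear_minus bounded_linear_inner_left)
  then show ?case
    unfolding Ck.simps
    by (intro exI[of _ "\<lambda>x v. - (x \<bullet> v) * inverse (norm x) ^ 3"] conjI ballI allI
        has_derivative_inverse_norm) auto
qed (simp, intro continuous_intros, auto)

lemma has_derivative_vec_nth [derivative_intros]:
  "((\<lambda>x. x $ i) has_derivative (\<lambda>v. v $ i)) F"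
  by (rule bounded_linear_imp_has_derivative[OF bounded_linear_vec_nth])

lemma norm_vec_power2: "(norm (x :: real^'n))\<^sup>2 = (\<Sum>i\<in>UNIV. (x $ i)\<^sup>2)"
  unfolding power2_norm_eq_inner inner_vec_def by (simp add: power2_eq_square)

lemma egrad_eq:
  assumes "(f has_derivative f') (at x)"
  shows "egrad f x = (\<chi> i. f' (axis i 1))"
  using frechet_derivative_at[OF assms] by (simp add: egrad_def)

lemma elaplacian_eq:
  assumes "open U" "x \<in> U"
    and f: "\<And>y. y \<in> U \<Longrightarrow> (f has_derivative f' y) (at y)"
    and f'': "\<And>i. ((\<lambda>y. f' y (axis i 1)) has_derivative f'' i) (at x)"
  shows "elaplacian f x = (\<Sum>i\<in>UNIV. f'' i (axis i 1))"
proof -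
  have "frechet_derivative f (at y) = f' y" if "y \<in> U" for y
    using frechet_derivative_at[OF f[OF that]] by simp
  then have "((\<lambda>y. frechet_derivative f (at y) (axis i 1)) has_derivative f'' i) (at x)" for i
    by (intro has_derivative_transform_within_open[OF f'' assms(1,2)]) simp
  then have "frechet_derivative (\<lambda>y. frechet_derivative f (at y) (axis i 1)) (at x) = f'' i" for i
    by (rule frechet_derivative_at[symmetric])
  then show ?thesis
    unfolding elaplacian_def by simp
qed

lemma elaplacian_compose:
  assumes U: "open U" "x \<in> U"
    and f: "\<And>y. y \<in> U \<Longrightarrow> (f has_derivative f' y) (at y)"
    and f'': "\<And>i. ((\<lambda>y. f' y (axis i 1)) has_derivative f'' i) (at x)"
    and g: "\<And>s. (g has_real_derivative g' s) (at s)"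
    and g': "\<And>s. (g' has_real_derivative g'' s) (at s)"
  shows "elaplacian (\<lambda>y. g (f y)) x = g'' (f x) * (norm (egrad f x))\<^sup>2 + g' (f x) * elaplacian f x"
proof -
  have gf: "((\<lambda>y. g (f y)) has_derivative (\<lambda>v. g' (f y) * f' y v)) (at y)" if "y \<in> U" for y
    using has_derivative_compose[OF f[OF that] g[unfolded has_field_derivative_def]]
    by (simp add: o_def mult.commute)
  have gf'': "((\<lambda>y. g' (f y) * f' y (axis i 1)) has_derivative
      (\<lambda>v. g'' (f x) * f' x v * f' x (axis i 1) + g' (f x) * f'' i v)) (at x)" for i
  proof -
    have "((\<lambda>y. g' (f y)) has_derivative (\<lambda>v. g'' (f x) * f' x v)) (at x)"
      using has_derivative_compose[OF f[OF U(2)] g'[unfolded has_field_derivative_def]]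
      by (simp add: o_def mult.commute)
    from has_derivative_mult[OF this f''[of i]] show ?thesis
      by (simp add: algebra_simps)
  qed
  have "elaplacian (\<lambda>y. g (f y)) x =
      (\<Sum>i\<in>UNIV. g'' (f x) * (f' x (axis i 1))\<^sup>2 + g' (f x) * f'' i (axis i 1))"
    using elaplacian_eq[OF U gf gf''] by (simp add: power2_eq_square mult.assoc)
  also have "\<dots> = g'' (f x) * (norm (egrad f x))\<^sup>2 + g' (f x) * elaplacian f x"
    by (simp add: elaplacian_eq[OF U f f''] egrad_eq[OF f[OF U(2)]] norm_vec_power2
        sum.distrib sum_distrib_left)
  finally show ?thesis .
qed

lemma egrad_compose:
  assumes "(f has_derivative f') (at x)" and "(g has_real_derivative d) (at (f x))"
  shows "egrad (\<lambda>y. g (f y)) x = d *\<^sub>R egrad f x"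
proof -
  have "((\<lambda>y. g (f y)) has_derivative (\<lambda>v. d * f' v)) (at x)"
    using has_derivative_compose[OF assms(1) assms(2)[unfolded has_field_derivative_def]]
    by (simp add: o_def mult.commute)
  then show ?thesis
    by (simp add: egrad_eq[OF assms(1)] egrad_eq vec_eq_iff)
qed

definition axis_cos :: "'n \<Rightarrow> real^'n \<Rightarrow> real" where
  "axis_cos a x = x $ a / norm x"

definition axis_cos_deriv :: "'n \<Rightarrow> real^'n \<Rightarrow> real^'n \<Rightarrow> real" where
  "axis_cos_deriv a x v = v $ a / norm x - x $ a * (x \<bullet> v) / norm x ^ 3"

definition axis_cos_hessian :: "'n \<Rightarrow> real^'n \<Rightarrow> 'n \<Rightarrow> real^'n \<Rightarrow> real" where
  "axis_cos_hessian a x i v =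
     - (if a = i then 1 else 0) * (x \<bullet> v) / norm x ^ 3 - (v $ a * x $ i + x $ a * v $ i) / norm x ^ 3
     + 3 * x $ a * x $ i * (x \<bullet> v) / norm x ^ 5"

lemma axis_cos_unit: "norm x = 1 \<Longrightarrow> axis_cos a x = x $ a"
  by (simp add: axis_cos_def)

lemma Ck_axis_cos: "Ck k (- {0}) (axis_cos a)"
  unfolding axis_cos_def divide_inverse
  by (intro Ck_mult Ck_inverse_norm Ck_bounded_linear bounded_linear_vec_nth)

lemma axis_cos_deriv_axis:
  "axis_cos_deriv a x (axis i 1) = (if a = i then 1 else 0) / norm x - x $ a * x $ i / norm x ^ 3"
  by (simp add: axis_cos_deriv_def inner_axis) (simp add: axis_def)

lemma has_derivative_axis_cos:
  assumes "x \<noteq> 0"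
  shows "(axis_cos a has_derivative axis_cos_deriv a x) (at x)"
  unfolding axis_cos_def[abs_def] axis_cos_deriv_def[abs_def]
  by (rule derivative_eq_intros has_derivative_norm[OF assms] refl | simp add: assms)+
     (simp add: assms sgn_div_norm inner_commute field_simps power2_eq_square power3_eq_cube)

lemma has_derivative_axis_cos_deriv:
  assumes "x \<noteq> 0"
  shows "((\<lambda>y. axis_cos_deriv a y (axis i 1)) has_derivative axis_cos_hessian a x i) (at x)"
  unfolding axis_cos_deriv_axis axis_cos_hessian_def[abs_def]
  by (rule derivative_eq_intros has_derivative_norm[OF assms] refl | simp add: assms)+
     (simp add: assms sgn_div_norm inner_commute field_simps power2_eq_square power3_eq_cube
       fun_eq_iff eval_nat_numeral)

lemma
  fixes x :: "real^'n"
  assumes "norm x = 1"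
  shows norm_egrad_axis_cos: "(norm (egrad (axis_cos a) x))\<^sup>2 = 1 - (x $ a)\<^sup>2"
    and elaplacian_axis_cos: "elaplacian (axis_cos a) x = - (real CARD('n) - 1) * x $ a"
proof -
  have x: "x \<noteq> 0" using assms by auto
  have sum_sq: "(\<Sum>i\<in>UNIV. (x $ i)\<^sup>2) = 1"
    using norm_vec_power2[of x] assms by simp
  have "((if a = i then 1 else 0) - x $ a * x $ i)\<^sup>2 =
      (if a = i then 1 - 2 * (x $ a)\<^sup>2 else 0) + (x $ a)\<^sup>2 * (x $ i)\<^sup>2" for i
    by (simp add: power2_eq_square algebra_simps)
  then show "(norm (egrad (axis_cos a) x))\<^sup>2 = 1 - (x $ a)\<^sup>2"
    by (simp add: egrad_eq[OF has_derivative_axis_cos[OF x]] norm_vec_power2 axis_cos_deriv_axis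
        assms sum.distrib sum_distrib_left[symmetric] sum_sq)
  have hessian: "axis_cos_hessian a x i (axis i 1) =
      (if a = i then - 2 * x $ a else 0) - x $ a + 3 * x $ a * (x $ i)\<^sup>2" for i
    by (simp add: axis_cos_hessian_def assms inner_axis) (auto simp: axis_def power2_eq_square)
  have "elaplacian (axis_cos a) x = (\<Sum>i\<in>UNIV. axis_cos_hessian a x i (axis i 1))"
    by (rule elaplacian_eq[where U = "- {0}", OF _ _ has_derivative_axis_cos has_derivative_axis_cos_deriv])
       (use x in auto)
  also have "\<dots> = - 2 * x $ a - real CARD('n) * x $ a + 3 * x $ a * (\<Sum>i\<in>UNIV. (x $ i)\<^sup>2)"
    by (simp add: hessian sum.distrib sum_subtractf sum_distrib_left)
  finally show "elaplacian (axis_cos a) x = - (real CARD('n) - 1) * x $ a"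
    by (simp add: sum_sq algebra_simps)
qed

lemma
  fixes x :: "real^'n"
  assumes x: "norm x = 1"
    and g: "\<And>s. (g has_real_derivative g' s) (at s)"
    and g': "\<And>s. (g' has_real_derivative g'' s) (at s)"
  shows norm_egrad_zonal: "(norm (egrad (\<lambda>y. g (axis_cos a y)) x))\<^sup>2 = (1 - (x $ a)\<^sup>2) * (g' (x $ a))\<^sup>2"
    and elaplacian_zonal: "elaplacian (\<lambda>y. g (axis_cos a y)) x =
      (1 - (x $ a)\<^sup>2) * g'' (x $ a) - (real CARD('n) - 1) * x $ a * g' (x $ a)"
proof -
  have x0: "x \<noteq> 0" using x by auto
  show "(norm (egrad (\<lambda>y. g (axis_cos a y)) x))\<^sup>2 = (1 - (x $ a)\<^sup>2) * (g' (x $ a))\<^sup>2"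
    using egrad_compose[OF has_derivative_axis_cos[OF x0] g] norm_egrad_axis_cos[OF x]
    by (simp add: axis_cos_unit[OF x] power_mult_distrib)
  have "elaplacian (\<lambda>y. g (axis_cos a y)) x =
      g'' (axis_cos a x) * (norm (egrad (axis_cos a) x))\<^sup>2 + g' (axis_cos a x) * elaplacian (axis_cos a) x"
    by (rule elaplacian_compose[where U = "- {0}", OF _ _ has_derivative_axis_cos
          has_derivative_axis_cos_deriv g g']) (use x0 in auto)
  then show "elaplacian (\<lambda>y. g (axis_cos a y)) x =
      (1 - (x $ a)\<^sup>2) * g'' (x $ a) - (real CARD('n) - 1) * x $ a * g' (x $ a)"
    by (simp add: norm_egrad_axis_cos[OF x] elaplacian_axis_cos[OF x] axis_cos_unit[OF x] algebra_simps)
qed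

lemma nn_integral_ball_homogeneous:
  fixes F :: "'a::euclidean_space \<Rightarrow> ennreal"
  assumes [measurable]: "F \<in> borel_measurable borel"
    and hom: "\<And>x. F (t *\<^sub>R x) = F x" and t: "t > 0"
  shows "(\<integral>\<^sup>+x. F x * indicator (ball 0 t) x \<partial>lborel) =
    ennreal (t ^ DIM('a)) * (\<integral>\<^sup>+x. F x * indicator (ball 0 1) x \<partial>lborel)"
proof -
  have [measurable]: "ball (0::'a) r \<in> sets borel" for r
    by simp
  have lborel_eq: "lborel = density (distr lborel borel (\<lambda>x::'a. 0 + t *\<^sub>R x)) (\<lambda>_. ennreal (\<bar>t\<bar> ^ DIM('a)))"
    using lborel_affine[of t 0] t by simp
  have "(\<integral>\<^sup>+x. F x * indicator (ball 0 t) x \<partial>lborel) =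
      (\<integral>\<^sup>+x. F x * indicator (ball 0 t) x
        \<partial>density (distr lborel borel (\<lambda>x::'a. 0 + t *\<^sub>R x)) (\<lambda>_. ennreal (\<bar>t\<bar> ^ DIM('a))))"
    by (simp only: lborel_eq[symmetric])
  also have "\<dots> = (\<integral>\<^sup>+x. ennreal (\<bar>t\<bar> ^ DIM('a)) * (F (t *\<^sub>R x) * indicator (ball 0 t) (t *\<^sub>R x)) \<partial>lborel)"
    apply (subst nn_integral_density)
     apply measurable
    apply (subst nn_integral_distr)
      apply measurable
    done
  also have "\<dots> = (\<integral>\<^sup>+x. ennreal (t ^ DIM('a)) * (F x * indicator (ball 0 1) x) \<partial>lborel)"
    using t by (intro nn_integral_cong) (simp add: hom indicator_def)
  also have "\<dots> = ennreal (t ^ DIM('a)) * (\<integral>\<^sup>+x. F x * indicator (ball 0 1) x \<partial>lborel)"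
    by (rule nn_integral_cmult) measurable
  finally show ?thesis .
qed

lemma nn_integral_power_Ico:
  assumes "t > 0" and "n \<ge> 1"
  shows "(\<integral>\<^sup>+r. ennreal (real n * r ^ (n - 1)) * indicator {0..<t} r \<partial>lborel) = ennreal (t ^ n)"
proof -
  have "((\<lambda>r. real n * r ^ (n - 1)) has_integral (t ^ n - 0 ^ n)) {0..t}"
    using assms(1) by (intro fundamental_theorem_of_calculus)
       (auto intro!: derivative_eq_intros simp: has_real_derivative_iff_has_vector_derivative[symmetric])
  then have integral: "((\<lambda>r. real n * r ^ (n - 1)) has_integral (t ^ n)) {0..t}"
    using assms(2) by (simp add: zero_power)
  have "(\<integral>\<^sup>+r. ennreal (real n * r ^ (n - 1)) * indicator {0..<t} r \<partial>lborel) =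
        (\<integral>\<^sup>+r. ennreal (real n * r ^ (n - 1)) * indicator {0..t} r \<partial>lborel)"
    by (intro nn_integral_cong_AE eventually_mono[OF AE_lborel_singleton[of t]])
       (auto simp: indicator_def)
  also have "\<dots> = ennreal (t ^ n)"
    by (rule nn_integral_has_integral_lebesgue'[OF _ integral]) auto
  finally show ?thesis .
qed

text \<open>Polar coordinates for a 0-homogeneous density \<open>F\<close>: both measures give \<open>{..<t}\<close> the mass
  \<open>t\<^sup>n \<integral>\<^sub>B F\<close>.\<close>

lemma distr_norm_density_homogeneous:
  fixes F :: "'a::euclidean_space \<Rightarrow> ennreal"
  assumes [measurable]: "F \<in> borel_measurable borel"
    and hom: "\<And>t x. t > 0 \<Longrightarrow> F (t *\<^sub>R x) = F x"
    and finite: "(\<integral>\<^sup>+x. F x * indicator (ball 0 1) x \<partial>lborel) < \<infinity>"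
  shows "distr (density lborel F) borel norm = density lborel
    (\<lambda>r. (\<integral>\<^sup>+x. F x * indicator (ball 0 1) x \<partial>lborel) * ennreal (real DIM('a) * r ^ (DIM('a) - 1)) * indicator {0..} r)"
    (is "?L = density lborel (\<lambda>r. ?\<Phi> * _ * _)")
proof -
  let ?R = "density lborel (\<lambda>r. ?\<Phi> * ennreal (real DIM('a) * r ^ (DIM('a) - 1)) * indicator {0..} r)"
  have [measurable]: "ball (0::'a) r \<in> sets borel" for r
    by simp
  have L: "emeasure ?L {..<t} = (if t > 0 then ennreal (t ^ DIM('a)) * ?\<Phi> else 0)" for t :: real
  proof -
    have "emeasure ?L {..<t} = emeasure (density lborel F) (ball 0 t)"
      by (subst emeasure_distr) (auto intro!: arg_cong2[where f = emeasure] simp: mem_ball)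
    also have "\<dots> = (\<integral>\<^sup>+x. F x * indicator (ball 0 t) x \<partial>lborel)"
      by (rule emeasure_density) auto
    finally show ?thesis
      using nn_integral_ball_homogeneous[of F t] hom by (auto simp: ball_empty)
  qed
  have R: "emeasure ?R {..<t} = (if t > 0 then ennreal (t ^ DIM('a)) * ?\<Phi> else 0)" for t :: real
  proof -
    have "emeasure ?R {..<t} =
        (\<integral>\<^sup>+r. ?\<Phi> * (ennreal (real DIM('a) * r ^ (DIM('a) - 1)) * indicator {0..<t} r) \<partial>lborel)"
      by (subst emeasure_density) (auto intro!: nn_integral_cong simp: indicator_def)
    also have "\<dots> = ?\<Phi> * (\<integral>\<^sup>+r. ennreal (real DIM('a) * r ^ (DIM('a) - 1)) * indicator {0..<t} r \<partial>lborel)"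
      by (rule nn_integral_cmult) measurable
    finally show ?thesis
      using nn_integral_power_Ico[of t "DIM('a)"] by (auto simp: mult.commute)
  qed
  show ?thesis
  proof (rule measure_eqI_generator_eq_countable[where E = "range lessThan" and \<Omega> = UNIV
        and A = "range (\<lambda>n::nat. {..<real n})"])
    show "Int_stable (range lessThan :: real set set)"
    proof (clarsimp simp: Int_stable_def)
      fix a b :: real
      have "{..<a} \<inter> {..<b} = {..<min a b}" by auto
      then show "{..<a} \<inter> {..<b} \<in> range lessThan" by blast
    qed
    show "sets ?L = sigma_sets UNIV (range lessThan)" "sets ?R = sigma_sets UNIV (range lessThan)"
      by (simp_all add: borel_Iio sets_measure_of)
    show "\<Union> (range (\<lambda>n::nat. {..<real n})) = UNIV"
      by (auto intro: reals_Archimedean2)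
    show "emeasure ?L X \<noteq> \<infinity>" if "X \<in> range (\<lambda>n::nat. {..<real n})" for X
      using that L finite by (auto simp: ennreal_mult_eq_top_iff split: if_splits)
    show "emeasure ?L X = emeasure ?R X" if "X \<in> range lessThan" for X
      using that L R by auto
  qed auto
qed

lemma nn_integral_homogeneous_radial:
  fixes F :: "'a::euclidean_space \<Rightarrow> ennreal" and w :: "real \<Rightarrow> ennreal"
  assumes [measurable]: "F \<in> borel_measurable borel" "w \<in> borel_measurable borel"
    and hom: "\<And>t x. t > 0 \<Longrightarrow> F (t *\<^sub>R x) = F x"
    and finite: "(\<integral>\<^sup>+x. F x * indicator (ball 0 1) x \<partial>lborel) < \<infinity>"
  shows "(\<integral>\<^sup>+x. F x * w (norm x) \<partial>lborel) = (\<integral>\<^sup>+x. F x * indicator (ball 0 1) x \<partial>lborel) *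
     (\<integral>\<^sup>+r. ennreal (real DIM('a) * r ^ (DIM('a) - 1)) * indicator {0..} r * w r \<partial>lborel)"
proof -
  have "(\<integral>\<^sup>+x. F x * w (norm x) \<partial>lborel) = (\<integral>\<^sup>+r. w r \<partial>distr (density lborel F) borel norm)"
    by (simp add: nn_integral_density nn_integral_distr)
  also have "\<dots> = (\<integral>\<^sup>+r. (\<integral>\<^sup>+x. F x * indicator (ball 0 1) x \<partial>lborel) *
      (ennreal (real DIM('a) * r ^ (DIM('a) - 1)) * indicator {0..} r * w r) \<partial>lborel)"
    by (simp add: distr_norm_density_homogeneous[OF assms(1) hom finite] nn_integral_density mult.assoc)
  also have "\<dots> = (\<integral>\<^sup>+x. F x * indicator (ball 0 1) x \<partial>lborel) *
     (\<integral>\<^sup>+r. ennreal (real DIM('a) * r ^ (DIM('a) - 1)) * indicator {0..} r * w r \<partial>lborel)"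
    by (rule nn_integral_cmult) measurable
  finally show ?thesis .
qed

definition half_gaussian_moment :: "nat \<Rightarrow> real" where
  "half_gaussian_moment p =
     (if even p then sqrt pi / 2 * (fact p / (2 ^ p * fact (p div 2))) else fact (p div 2) / 2)"

lemma half_gaussian_moment_pos: "half_gaussian_moment p > 0"
  by (simp add: half_gaussian_moment_def)

lemma has_bochner_integral_half_gaussian_moment:
  "has_bochner_integral lborel (\<lambda>r. indicator {0..} r *\<^sub>R (exp (- r\<^sup>2) * r ^ p)) (half_gaussian_moment p)"
proof (cases "even p")
  case True
  then obtain k where "p = 2 * k" by blast
  then show ?thesis
    using gaussian_moment_even_pos[of k] by (simp add: half_gaussian_moment_def)
next
  case False
  then obtain k where "p = 2 * k + 1" by (blast elim: oddE)
  then show ?thesis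
    using gaussian_moment_odd_pos[of k] by (simp add: half_gaussian_moment_def)
qed

lemma nn_integral_half_gaussian_moment:
  "(\<integral>\<^sup>+r. ennreal (indicator {0..} r * (exp (- r\<^sup>2) * r ^ p)) \<partial>lborel) = ennreal (half_gaussian_moment p)"
  using has_bochner_integral_half_gaussian_moment[of p] half_gaussian_moment_pos[of p]
  by (subst nn_integral_eq_integrable) (auto simp: has_bochner_integral_iff indicator_def)

lemma nn_integral_gaussian_even_moment:
  "(\<integral>\<^sup>+t. ennreal (exp (- t\<^sup>2) * t ^ (2 * k)) \<partial>lborel) = ennreal (2 * half_gaussian_moment (2 * k))"
proof -
  have "has_bochner_integral lborel (\<lambda>t. exp (- t\<^sup>2) * t ^ (2 * k)) (2 * half_gaussian_moment (2 * k))"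
    using has_bochner_integral_even_function[OF has_bochner_integral_half_gaussian_moment] by simp
  then show ?thesis
    using half_gaussian_moment_pos[of "2 * k"]
    by (subst nn_integral_eq_integrable) (auto simp: has_bochner_integral_iff)
qed

lemma half_gaussian_moment_add2: "half_gaussian_moment (p + 2) = (real p + 1) / 2 * half_gaussian_moment p"
proof (cases "even p")
  case True
  then obtain k where p: "p = 2 * k" by blast
  have "fact (2 * k + 2) / (2 ^ (2 * k + 2) * fact (k + 1)) =
      (2 * real k + 1) / 2 * (fact (2 * k) / (2 ^ (2 * k) * fact k) :: real)"
  proof -
    have "fact (2 * k + 2) = 2 * (real k + 1) * (2 * real k + 1) * (fact (2 * k) :: real)"
      by (simp add: fact_Suc numeral_2_eq_2 algebra_simps)
    moreover have "fact (k + 1) = (real k + 1) * (fact k :: real)"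
      by simp
    moreover have "real k + 1 \<noteq> 0" "fact k \<noteq> (0::real)"
      by auto
    ultimately show ?thesis
      by (simp add: power_add divide_simps) (simp add: algebra_simps)
  qed
  moreover have "(2 * k + 2) div 2 = k + 1"
    by simp
  ultimately show ?thesis
    by (simp add: half_gaussian_moment_def p)
next
  case False
  then obtain k where p: "p = 2 * k + 1" by (blast elim: oddE)
  have "(p + 2) div 2 = Suc k" "p div 2 = k"
    using p by auto
  with False p show ?thesis
    by (simp add: half_gaussian_moment_def field_simps)
qed

lemma nn_integral_gaussian_component_power:
  fixes a :: "'n::finite"
  shows "(\<integral>\<^sup>+x. ennreal ((x $ a) ^ (2 * j) * exp (- (norm x)\<^sup>2)) \<partial>(lborel :: (real^'n) measure)) =
     ennreal (2 * half_gaussian_moment (2 * j) * (2 * half_gaussian_moment 0) ^ (CARD('n) - 1))"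
proof -
  define e :: "real^'n" where "e = axis a 1"
  have e: "e \<in> Basis" by (simp add: e_def)
  define f where "f b t = ennreal (exp (- t\<^sup>2) * t ^ (2 * (if b = e then j else 0)))" for b :: "real^'n" and t
  have [measurable]: "f b \<in> borel_measurable borel" for b
    unfolding f_def by measurable
  have "(\<Prod>b\<in>Basis. f b (x \<bullet> b)) = ennreal ((x $ a) ^ (2 * j) * exp (- (norm x)\<^sup>2))" for x :: "real^'n"
  proof -
    have "(\<Prod>b\<in>Basis. exp (- (x \<bullet> b)\<^sup>2) * (x \<bullet> b) ^ (2 * (if b = e then j else 0))) =
        exp (- (\<Sum>b\<in>Basis. (x \<bullet> b)\<^sup>2)) * (\<Prod>b\<in>Basis. if b = e then (x \<bullet> b) ^ (2 * j) else 1)"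
      by (simp add: prod.distrib exp_sum[symmetric] sum_negf if_distrib[of "\<lambda>k. _ ^ (2 * k)"] cong: if_cong)
    also have "\<dots> = exp (- (norm x)\<^sup>2) * (x $ a) ^ (2 * j)"
    proof -
      have "(\<Sum>b\<in>Basis. (x \<bullet> b)\<^sup>2) = (norm x)\<^sup>2"
        by (simp add: euclidean_inner[of x x, symmetric] power2_eq_square dot_square_norm)
      then show ?thesis
        using e by (simp add: e_def inner_axis)
    qed
    finally show ?thesis
      unfolding f_def by (simp add: prod_ennreal mult.commute)
  qed
  then have "(\<integral>\<^sup>+x. ennreal ((x $ a) ^ (2 * j) * exp (- (norm x)\<^sup>2)) \<partial>(lborel :: (real^'n) measure)) =
      (\<Prod>b\<in>Basis. (\<integral>\<^sup>+t. f b t \<partial>lborel))"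
    by (simp add: nn_integral_lborel_prod[symmetric] f_def)
  also have "\<dots> = (\<Prod>b\<in>Basis. ennreal (2 * half_gaussian_moment (2 * (if b = e then j else 0))))"
    unfolding f_def by (intro prod.cong refl nn_integral_gaussian_even_moment)
  also have "\<dots> = ennreal (2 * half_gaussian_moment (2 * j)) * ennreal (2 * half_gaussian_moment 0) ^ (CARD('n) - 1)"
    using e by (simp add: prod.remove[OF _ e] prod.cong[of "Basis - {e}" _ _ "\<lambda>_. ennreal (2 * half_gaussian_moment 0)"])
  also have "\<dots> = ennreal (2 * half_gaussian_moment (2 * j) * (2 * half_gaussian_moment 0) ^ (CARD('n) - 1))"
  proof -
    have "0 \<le> 2 * half_gaussian_moment 0" "0 \<le> 2 * half_gaussian_moment (2 * j)"
      using half_gaussian_moment_pos less_imp_le by auto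
    then show ?thesis
      by (simp only: ennreal_power ennreal_mult[symmetric] zero_le_power)
  qed
  finally show ?thesis .
qed

lemma abs_axis_cos_le_1: "\<bar>axis_cos a x\<bar> \<le> 1"
  using component_le_norm_cart[of x a]
  by (cases "x = 0") (auto simp: axis_cos_def abs_div)

lemma axis_cos_scaleR: "t > 0 \<Longrightarrow> axis_cos a (t *\<^sub>R x) = axis_cos a x"
  by (simp add: axis_cos_def)

lemma axis_cos_measurable [measurable]: "axis_cos (a :: 'n::finite) \<in> borel_measurable borel"
proof -
  have [measurable]: "(\<lambda>x::real^'n. x $ a) \<in> borel_measurable borel"
    by (intro borel_measurable_continuous_onI linear_continuous_on bounded_linear_vec_nth)
  show ?thesis
    unfolding axis_cos_def by measurable
qed

lemma nn_integral_power_half_gaussian: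
  assumes "c \<ge> 0"
  shows "(\<integral>\<^sup>+r. ennreal (c * r ^ k) * indicator {0..} r * ennreal (r ^ m * exp (- r\<^sup>2)) \<partial>lborel) =
    ennreal (c * half_gaussian_moment (k + m))"
proof -
  have "(\<integral>\<^sup>+r. ennreal (c * r ^ k) * indicator {0..} r * ennreal (r ^ m * exp (- r\<^sup>2)) \<partial>lborel) =
      (\<integral>\<^sup>+r. ennreal c * ennreal (indicator {0..} r * (exp (- r\<^sup>2) * r ^ (k + m))) \<partial>lborel)"
    using assms by (intro nn_integral_cong)
      (auto simp: indicator_def power_add ennreal_mult'[symmetric] mult_ac)
  also have "\<dots> = ennreal c * ennreal (half_gaussian_moment (k + m))"
    unfolding nn_integral_half_gaussian_moment[symmetric] by (rule nn_integral_cmult) measurable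
  also have "\<dots> = ennreal (c * half_gaussian_moment (k + m))"
    using assms half_gaussian_moment_pos[of "k + m"] by (simp add: ennreal_mult)
  finally show ?thesis .
qed

lemma nn_integral_ball_axis_cos_power_finite:
  fixes a :: "'n::finite"
  shows "(\<integral>\<^sup>+x. ennreal (axis_cos a x ^ (2 * j)) * indicator (ball 0 1) x \<partial>lborel) < \<infinity>"
proof -
  have "(\<integral>\<^sup>+x. ennreal (axis_cos a x ^ (2 * j)) * indicator (ball 0 1) x \<partial>lborel) \<le>
      (\<integral>\<^sup>+x. indicator (ball (0::real^'n) 1) x \<partial>lborel)"
  proof (rule nn_integral_mono)
    fix x :: "real^'n"
    have "((axis_cos a x)\<^sup>2) ^ j \<le> 1"
      using abs_axis_cos_le_1[of a x] by (intro power_le_one[OF zero_le_power2]) (simp add: abs_square_le_1)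
    then show "ennreal (axis_cos a x ^ (2 * j)) * indicator (ball 0 1) x \<le> indicator (ball 0 1) x"
      by (auto simp: indicator_def power_mult)
  qed
  then show ?thesis
    using emeasure_lborel_ball_finite[of "0::real^'n" 1] by (simp add: order_le_less_trans)
qed

text \<open>Both sides are computed from \<open>\<integral> x\<^sub>a\<^sup>2\<^sup>j e\<^sup>-\<^sup>|\<^sup>x\<^sup>|\<^sup>2 dx\<close>: as a product of
  one-dimensional Gaussian moments, and in polar coordinates.\<close>

lemma nn_integral_ball_axis_cos_power:
  fixes a :: "'n::finite"
  shows "(\<integral>\<^sup>+x. ennreal (axis_cos a x ^ (2 * j)) * indicator (ball 0 1) x \<partial>(lborel :: (real^'n) measure)) =
    ennreal (2 * half_gaussian_moment (2 * j) * (2 * half_gaussian_moment 0) ^ (CARD('n) - 1) /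
      (real CARD('n) * half_gaussian_moment (CARD('n) - 1 + 2 * j)))"
    (is "?\<Phi> = ennreal (?G / ?c)")
proof -
  define F where "F x = ennreal (axis_cos a x ^ (2 * j))" for x :: "real^'n"
  define w where "w r = ennreal (r ^ (2 * j) * exp (- r\<^sup>2))" for r :: real
  have [measurable]: "F \<in> borel_measurable borel" "w \<in> borel_measurable borel"
    unfolding F_def w_def by measurable
  have "F x * w (norm x) = ennreal ((x $ a) ^ (2 * j) * exp (- (norm x)\<^sup>2))" for x :: "real^'n"
  proof (cases "x = 0")
    case True
    then show ?thesis by (cases j) (simp_all add: F_def w_def axis_cos_def)
  next
    case False
    then have "axis_cos a x ^ (2 * j) * norm x ^ (2 * j) = (x $ a) ^ (2 * j)"
      by (simp add: axis_cos_def power_divide)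
    then show ?thesis
      unfolding F_def w_def by (simp add: ennreal_mult'[symmetric] mult.assoc[symmetric])
  qed
  moreover have "(\<integral>\<^sup>+x. F x * indicator (ball 0 1) x \<partial>lborel) < \<infinity>"
    using nn_integral_ball_axis_cos_power_finite[of a j] by (simp add: F_def)
  ultimately have polar: "ennreal ?G = ?\<Phi> * ennreal ?c"
    using nn_integral_homogeneous_radial[of F w]
      nn_integral_gaussian_component_power[of a j] nn_integral_power_half_gaussian[of "real CARD('n)"]
    by (simp add: F_def w_def axis_cos_scaleR)
  have "?c > 0"
    using half_gaussian_moment_pos by simp
  have "?G \<ge> 0"
    by (intro mult_nonneg_nonneg zero_le_power) (simp_all add: less_imp_le half_gaussian_moment_pos)
  have "?\<Phi> = ?\<Phi> * ennreal ?c / ennreal ?c"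
    using \<open>?c > 0\<close> by (intro ennreal_mult_divide_eq[symmetric]) auto
  also have "\<dots> = ennreal ?G / ennreal ?c"
    unfolding polar ..
  also have "\<dots> = ennreal (?G / ?c)"
    by (rule divide_ennreal) fact+
  finally show ?thesis .
qed

lemma has_integral_axis_cos_power_gaussian:
  fixes a :: "'n::finite"
  shows "((\<lambda>x. axis_cos a x ^ (2 * j)) has_integral
      2 * half_gaussian_moment (2 * j) * (2 * half_gaussian_moment 0) ^ (CARD('n) - 1) /
      (real CARD('n) * half_gaussian_moment (CARD('n) - 1 + 2 * j))) (ball (0::real^'n) 1)"
    (is "(_ has_integral ?I) _")
proof -
  have [measurable]: "ball (0::real^'n) 1 \<in> sets borel"
    by simp
  have [measurable]: "(\<lambda>x. indicator (ball (0::real^'n) 1) x * axis_cos a x ^ (2 * j)) \<in> borel_measurable borel"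
    by measurable
  have "?I \<ge> 0"
    by (intro divide_nonneg_pos mult_nonneg_nonneg zero_le_power)
       (simp_all add: less_imp_le half_gaussian_moment_pos)
  moreover have "(\<integral>\<^sup>+x. ennreal (indicator (ball (0::real^'n) 1) x * axis_cos a x ^ (2 * j)) \<partial>lborel) =
      (\<integral>\<^sup>+x. ennreal (axis_cos a x ^ (2 * j)) * indicator (ball 0 1) x \<partial>lborel)"
    by (intro nn_integral_cong) (simp add: indicator_def)
  then have "(\<integral>\<^sup>+x. ennreal (indicator (ball (0::real^'n) 1) x * axis_cos a x ^ (2 * j)) \<partial>lborel) =
      ennreal ?I"
    by (simp only: nn_integral_ball_axis_cos_power)
  ultimately have "((\<lambda>x. indicator (ball (0::real^'n) 1) x * axis_cos a x ^ (2 * j)) has_integral ?I) UNIV"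
    by (intro nn_integral_has_integral) (simp_all add: power_mult)
  moreover have "(\<lambda>x. indicator (ball (0::real^'n) 1) x * axis_cos a x ^ (2 * j)) =
      (\<lambda>x. if x \<in> ball 0 1 then axis_cos a x ^ (2 * j) else 0)"
    by (auto simp: indicator_def)
  ultimately have "((\<lambda>x. if x \<in> ball 0 1 then axis_cos a x ^ (2 * j) else 0) has_integral ?I) UNIV"
    by (simp only:)
  then show ?thesis
    by (rule has_integral_restrict_UNIV[THEN iffD1])
qed

lemma has_integral_axis_cos_power:
  fixes a :: "'n::finite"
  shows "((\<lambda>x. axis_cos a x ^ (2 * j)) has_integral
     measure lborel (ball (0::real^'n) 1) * (\<Prod>i<j. (2 * real i + 1) / (real CARD('n) + 2 * real i))) (ball 0 1)"
proof -
  define m where "m j = 2 * half_gaussian_moment (2 * j) * (2 * half_gaussian_moment 0) ^ (CARD('n) - 1) /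
      (real CARD('n) * half_gaussian_moment (CARD('n) - 1 + 2 * j))" for j
  have m_Suc: "m (Suc j) = m j * ((2 * real j + 1) / (real CARD('n) + 2 * real j))" for j
  proof -
    define h where "h = half_gaussian_moment (CARD('n) - 1 + 2 * j)"
    obtain M where "CARD('n) = Suc M"
      using zero_less_card_finite gr0_implies_Suc by blast
    then have h_Suc: "half_gaussian_moment (CARD('n) - 1 + 2 * Suc j) = (real CARD('n) + 2 * real j) / 2 * h"
      using half_gaussian_moment_add2[of "CARD('n) - 1 + 2 * j"] by (simp add: h_def)
    have g_Suc: "half_gaussian_moment (2 * Suc j) = (2 * real j + 1) / 2 * half_gaussian_moment (2 * j)"
      using half_gaussian_moment_add2[of "2 * j"] by simp
    define D where "D = real CARD('n) + 2 * real j"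
    have "h > 0" "D > 0" "real CARD('n) > 0"
      by (simp_all add: h_def D_def half_gaussian_moment_pos add_pos_nonneg)
    then show ?thesis
      unfolding m_def h_Suc g_Suc h_def[symmetric] D_def[symmetric] by (simp add: field_simps)
  qed
  have "emeasure lborel (ball (0::real^'n) 1) = ennreal (measure lborel (ball (0::real^'n) 1))"
    using emeasure_lborel_ball_finite[of "0::real^'n" 1] by (intro emeasure_eq_ennreal_measure) simp
  then have "((\<lambda>x::real^'n. 1) has_integral measure lborel (ball (0::real^'n) 1)) (ball 0 1)"
    by (subst has_integral_iff_emeasure_lborel) simp_all
  with has_integral_axis_cos_power_gaussian[of a 0] have m0: "m 0 = measure lborel (ball (0::real^'n) 1)"
    unfolding m_def by (simp add: has_integral_unique)
  have "m j = measure lborel (ball (0::real^'n) 1) * (\<Prod>i<j. (2 * real i + 1) / (real CARD('n) + 2 * real i))"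
    by (induction j) (simp_all add: m0 m_Suc)
  then show ?thesis
    using has_integral_axis_cos_power_gaussian[of a j] by (simp add: m_def)
qed

text \<open>At the origin \<open>sphere_integral\<close> evaluates its integrand at \<open>0 /\<^sub>R 0 = 0\<close>, off the sphere;
  this single point is negligible.\<close>

lemma sphere_integral_cong:
  fixes f g :: "real^'n \<Rightarrow> real"
  assumes "\<And>y. norm y = 1 \<Longrightarrow> f y = g y"
  shows "sphere_integral f = sphere_integral g"
proof -
  have "integral (ball 0 1) (\<lambda>x. f (x /\<^sub>R norm x)) = integral (ball 0 1) (\<lambda>x::real^'n. g (x /\<^sub>R norm x))"
    by (rule integral_spike[OF negligible_sing[of 0]]) (simp add: assms)
  then show ?thesis
    by (simp add: sphere_integral_def)
qed

lemma sphere_integral_coordinate_even_polynomial: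
  fixes a :: "'n::finite"
  shows "sphere_integral (\<lambda>y::real^'n. \<Sum>j<m. c j * (y $ a) ^ (2 * j)) =
    real CARD('n) * measure lborel (ball (0::real^'n) 1) *
      (\<Sum>j<m. c j * (\<Prod>i<j. (2 * real i + 1) / (real CARD('n) + 2 * real i)))"
proof -
  have "((\<lambda>x::real^'n. \<Sum>j<m. c j * axis_cos a x ^ (2 * j)) has_integral
      (\<Sum>j<m. c j * (measure lborel (ball (0::real^'n) 1) * (\<Prod>i<j. (2 * real i + 1) / (real CARD('n) + 2 * real i)))))
      (ball 0 1)"
    by (intro has_integral_sum has_integral_mult_right has_integral_axis_cos_power) simp
  moreover have "(x /\<^sub>R norm x) $ a = axis_cos a x" for x :: "real^'n"
    by (simp add: axis_cos_def divide_inverse mult.commute)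
  ultimately show ?thesis
    by (simp add: sphere_integral_def integral_unique sum_distrib_left mult_ac)
qed

definition eta_profile :: "real \<Rightarrow> real \<Rightarrow> real" where
  "eta_profile N s = (N-1)*(N+1)*(N+3) * s^6 + 10*(N-1)*(N+1) * s^4 + 120*(N-1) * s^2 - 241"

definition eta_profile_deriv :: "real \<Rightarrow> real \<Rightarrow> real" where
  "eta_profile_deriv N s = 6*(N-1)*(N+1)*(N+3) * s^5 + 40*(N-1)*(N+1) * s^3 + 240*(N-1) * s"

definition eta_profile_deriv2 :: "real \<Rightarrow> real \<Rightarrow> real" where
  "eta_profile_deriv2 N s = 30*(N-1)*(N+1)*(N+3) * s^4 + 120*(N-1)*(N+1) * s^2 + 240*(N-1)"

definition eta_energy_coeffs :: "real \<Rightarrow> real list" where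
  "eta_energy_coeffs N =
    [58081 - 58081*N,
     115440 - 230880*N + 115440*N^2,
     -19180 + 47980*N - 38420*N^2 + 9620*N^3,
     -5114 + 7676*N + 2552*N^2 - 7676*N^3 + 2562*N^4,
     -7980 + 4940*N + 11160*N^2 - 5080*N^3 - 3180*N^4 + 140*N^5,
     -1056 - 304*N + 2128*N^2 + 608*N^3 - 1088*N^4 - 304*N^5 + 16*N^6,
     -315 - 219*N + 589*N^2 + 437*N^3 - 233*N^4 - 217*N^5 - 41*N^6 - N^7]"

lemma has_real_derivative_eta_profile: "(eta_profile N has_real_derivative eta_profile_deriv N s) (at s)"
  unfolding eta_profile_def eta_profile_deriv_def
  by (auto intro!: derivative_eq_intros simp: algebra_simps)

lemma has_real_derivative_eta_profile_deriv:
  "(eta_profile_deriv N has_real_derivative eta_profile_deriv2 N s) (at s)"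
  unfolding eta_profile_deriv_def eta_profile_deriv2_def
  by (auto intro!: derivative_eq_intros simp: algebra_simps)

lemma smooth_on_eta_profile_axis_cos: "smooth_on (- {0}) (\<lambda>x. eta_profile N (axis_cos a x))"
  unfolding smooth_on_def eta_profile_def diff_conv_add_uminus
  by (intro allI Ck_add Ck_mult[OF Ck_const] Ck_power Ck_axis_cos Ck_const)

lemma eta_profile_jacobi_neg:
  assumes "N > 1"
  shows "(1 - s\<^sup>2) * eta_profile_deriv2 N s - (N - 1) * s * eta_profile_deriv N s + (N - 1) * eta_profile N s < 0"
proof -
  have "(1 - s\<^sup>2) * eta_profile_deriv2 N s - (N - 1) * s * eta_profile_deriv N s + (N - 1) * eta_profile N s =
      - (5*(N-1)*(N+1)*(N+3)*(N+5) * s^6 + (N - 1))"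
    unfolding eta_profile_def eta_profile_deriv_def eta_profile_deriv2_def by algebra
  moreover have "0 \<le> 5*(N-1)*(N+1)*(N+3)*(N+5) * s^6"
    using assms by (simp add: zero_le_even_power)
  ultimately show ?thesis
    using assms by linarith
qed

lemma eta_energy_density:
  "(1 - s\<^sup>2) * (eta_profile_deriv N s)\<^sup>2 - (N - 1) * (eta_profile N s)\<^sup>2 =
     (\<Sum>j<7. eta_energy_coeffs N ! j * s ^ (2 * j))"
  by (simp add: eta_profile_def eta_profile_deriv_def eta_energy_coeffs_def eval_nat_numeral) algebra

lemma eta_energy_moments_pos:
  assumes "N \<ge> 3"
  shows "(\<Sum>j<7. eta_energy_coeffs N ! j * (\<Prod>i<j. (2 * real i + 1) / (N + 2 * real i))) > 0"
proof -
  have nz: "N \<noteq> 0" "N + 2 \<noteq> 0" "N + 4 \<noteq> 0" "N + 6 \<noteq> 0" "N + 8 \<noteq> 0" "N + 10 \<noteq> 0"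
    using assms by linarith+
  define D where "D = N * (N+2) * (N+4) * (N+6) * (N+8) * (N+10)"
  have "D * (\<Sum>j<7. eta_energy_coeffs N ! j * (\<Prod>i<j. (2 * real i + 1) / (N + 2 * real i))) =
      793745730 + (N-3) * (5383845921 + (N-3) * (6019511410 + (N-3) * (2782270301 +
        (N-3) * (655507780 + (N-3) * (83247029 + (N-3) * (5441950 + (N-3) * 144074))))))"
    unfolding D_def
    by (simp add: eta_energy_coeffs_def eval_nat_numeral) (simp add: divide_simps nz, algebra)
  also have "\<dots> > 0"
    using assms by (intro add_pos_nonneg mult_nonneg_nonneg add_nonneg_nonneg) auto
  finally have "D * (\<Sum>j<7. eta_energy_coeffs N ! j * (\<Prod>i<j. (2 * real i + 1) / (N + 2 * real i))) > 0" .
  moreover have "D > 0"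
    unfolding D_def using assms by (intro mult_pos_pos) auto
  ultimately show ?thesis
    by (simp add: zero_less_mult_iff)
qed

lemma sph_ext_coordinate: "sph_ext (\<lambda>y. g (y $ a)) = (\<lambda>x. g (axis_cos a x))"
  by (simp add: fun_eq_iff sph_ext_def axis_cos_def divide_inverse mult.commute)

theorem proposition2p2:
  assumes "CARD('n) \<ge> 3"
  shows "\<exists>\<eta> :: real^'n \<Rightarrow> real.
           smooth_on_sphere \<eta> \<and>
           (\<forall>x\<in>sphere 0 1. sphere_laplacian \<eta> x + (real CARD('n) - 1) * \<eta> x < 0) \<and>
           sphere_integral (\<lambda>x. (norm (sphere_grad \<eta> x))\<^sup>2 - (real CARD('n) - 1) * (\<eta> x)\<^sup>2) > 0"
proof -
  obtain a :: 'n where True by simp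
  define N where "N = real CARD('n)"
  define \<eta> where "\<eta> y = eta_profile N (y $ a)" for y :: "real^'n"
  have ext: "sph_ext \<eta> = (\<lambda>x. eta_profile N (axis_cos a x))"
    unfolding \<eta>_def by (rule sph_ext_coordinate)
  note derivs = has_real_derivative_eta_profile[of N] has_real_derivative_eta_profile_deriv[of N]
  have "sphere_laplacian \<eta> x + (N - 1) * \<eta> x < 0" if "x \<in> sphere 0 1" for x
  proof -
    have "sphere_laplacian \<eta> x + (N - 1) * \<eta> x = (1 - (x $ a)\<^sup>2) * eta_profile_deriv2 N (x $ a)
        - (N - 1) * x $ a * eta_profile_deriv N (x $ a) + (N - 1) * eta_profile N (x $ a)"
      using elaplacian_zonal[OF _ derivs, where x = x and a = a] that
      by (simp add: sphere_laplacian_def ext \<eta>_def N_def)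
    also have "\<dots> < 0"
      using assms by (intro eta_profile_jacobi_neg) (simp add: N_def)
    finally show ?thesis .
  qed
  moreover have "sphere_integral (\<lambda>x. (norm (sphere_grad \<eta> x))\<^sup>2 - (N - 1) * (\<eta> x)\<^sup>2) =
      sphere_integral (\<lambda>y. \<Sum>j<7. eta_energy_coeffs N ! j * (y $ a) ^ (2 * j))"
    by (rule sphere_integral_cong)
       (simp add: sphere_grad_def ext norm_egrad_zonal[OF _ derivs] \<eta>_def eta_energy_density)
  moreover have "sphere_integral (\<lambda>y. \<Sum>j<7. eta_energy_coeffs N ! j * (y $ a) ^ (2 * j)) > 0"
    using eta_energy_moments_pos[of N] assms
    by (simp add: sphere_integral_coordinate_even_polynomial N_def)
  moreover have "smooth_on_sphere \<eta>"
    unfolding smooth_on_sphere_def ext by (rule smooth_on_eta_profile_axis_cos)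
  ultimately show ?thesis
    unfolding N_def by auto
qed

end
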